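(* Let $\mathcal F$ be a homogeneous foliation of degree $d$ on $\mathbb P^2$, i.e. defined in some affine coordinates $(x,y)$ by a vector field whose coefficients are homogeneous polynomials of degree $d$, and let $O=(0,0)$. If the curvature $K(\mathrm{Leg}\,\mathcal F)$ is holomorphic on $\check{\mathbb P}^2\setminus\check O$, then $K(\mathrm{Leg}\,\mathcal F)\equiv 0$.
   Context: $\check O\subset\check{\mathbb P}^2$ denotes the dual line of $O$, consisting of the lines through $O$. With affine coordinates $(p,q)$ on $\check{\mathbb P}^2$ corresponding to the line $\{y=px+q\}$, the Legendre transform $\mathrm{Leg}\,\mathcal F$ of the foliation given by $A\partial_x+B\partial_y$ is the $d$-web on $\check{\mathbb P}^2$ defined by the implicit differential equation $B(x,px+q)-pA(x,px+q)=0$ with $x=-\frac{dq}{dp}$. The curvature $K(\mathcal W)$ of a web $\mathcal W$: for a $3$-web given locally off its discriminant by $1$-forms $\omega_1,\omega_2,\omega_3$ normalized so that $\omega_1+\omega_2+\omega_3=0$, there is a unique $1$-form $\eta$ with $d\omega_i=\eta\wedge\omega_i$, and $K=d\eta$; for a $k$-web with $k>3$ it is the sum of the curvatures of all its $3$-subwebs. It is a meromorphic $2$-form with poles in the discriminant. *)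

theory Defs
  imports "HOL-Analysis.Analysis"
begin

definition hom_form :: "(nat \<Rightarrow> complex) \<Rightarrow> nat \<Rightarrow> complex \<Rightarrow> complex \<Rightarrow> complex" where
  "hom_form c d x y = (\<Sum>i\<le>d. c i * x ^ i * y ^ (d - i))"

text \<open>Homogeneous foliation of degree d given by A d/dx + B d/dy with A = hom_form a d,
  B = hom_form b d: A and B have no common factor (equivalently, for binary forms,
  no common zero besides the origin) and the vector field is not radial
  (x B - y A not identically zero), so that the foliation really has degree d.\<close>
definition homogeneous_foliation :: "(nat \<Rightarrow> complex) \<Rightarrow> (nat \<Rightarrow> complex) \<Rightarrow> nat \<Rightarrow> bool" where
  "homogeneous_foliation a b d \<longleftrightarrow>
     (\<forall>x y. hom_form a d x y = 0 \<and> hom_form b d x y = 0 \<longrightarrow> x = 0 \<and> y = 0) \<and>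
     (\<exists>x y. x * hom_form b d x y - y * hom_form a d x y \<noteq> 0)"

text \<open>Implicit equation of Leg F in the affine chart (p,q) of the dual plane
  (line y = p x + q): the leaves through (p,q) have dq/dp = -x where x is a root of
  B(x, p x + q) - p A(x, p x + q).\<close>
definition leg_poly :: "(nat \<Rightarrow> complex) \<Rightarrow> (nat \<Rightarrow> complex) \<Rightarrow> nat \<Rightarrow> complex \<Rightarrow> complex \<Rightarrow> complex \<Rightarrow> complex" where
  "leg_poly a b d p q x = hom_form b d x (p * x + q) - p * hom_form a d x (p * x + q)"

definition dP :: "(complex \<times> complex \<Rightarrow> complex) \<Rightarrow> complex \<times> complex \<Rightarrow> complex" where
  "dP g z = deriv (\<lambda>t. g (t, snd z)) (fst z)"

definition dQ :: "(complex \<times> complex \<Rightarrow> complex) \<Rightarrow> complex \<times> complex \<Rightarrow> complex" where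
  "dQ g z = deriv (\<lambda>t. g (fst z, t)) (snd z)"

text \<open>Curvature (coefficient of dp wedge dq) of the 3-web given by the 1-forms
  w_i = dq + x_i dp.  Normalization: l_1 = x_2 - x_3, l_2 = x_3 - x_1, l_3 = x_1 - x_2,
  so that sum l_i w_i = 0.  Writing eta = e dp + f dq, the condition
  d(l_i w_i) = eta wedge (l_i w_i) reads e - x_i f = c_i with
  c_i = (dP l_i - dQ (l_i x_i)) / l_i; K = d eta = (dP f - dQ e) dp wedge dq.\<close>
definition web3_curv ::
  "(complex \<times> complex \<Rightarrow> complex) \<Rightarrow> (complex \<times> complex \<Rightarrow> complex) \<Rightarrow>
   (complex \<times> complex \<Rightarrow> complex) \<Rightarrow> complex \<times> complex \<Rightarrow> complex" where
  "web3_curv x1 x2 x3 z =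
     (let l1 = (\<lambda>w. x2 w - x3 w);
          l2 = (\<lambda>w. x3 w - x1 w);
          c1 = (\<lambda>w. (dP l1 w - dQ (\<lambda>v. l1 v * x1 v) w) / l1 w);
          c2 = (\<lambda>w. (dP l2 w - dQ (\<lambda>v. l2 v * x2 v) w) / l2 w);
          f = (\<lambda>w. (c1 w - c2 w) / (x2 w - x1 w));
          e = (\<lambda>w. c1 w + x1 w * f w)
      in dP f z - dQ e z)"

definition web_curv :: "nat \<Rightarrow> (nat \<Rightarrow> complex \<times> complex \<Rightarrow> complex) \<Rightarrow> complex \<times> complex \<Rightarrow> complex" where
  "web_curv d X z = (\<Sum>(i,j,k)\<in>{(i,j,k). i < j \<and> j < k \<and> k < d}. web3_curv (X i) (X j) (X k) z)"

definition sep_holo_on :: "(complex \<times> complex) set \<Rightarrow> (complex \<times> complex \<Rightarrow> complex) \<Rightarrow> bool" where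
  "sep_holo_on U g \<longleftrightarrow> (\<forall>z\<in>U. (\<lambda>t. g (t, snd z)) field_differentiable at (fst z) \<and>
                               (\<lambda>t. g (fst z, t)) field_differentiable at (snd z))"

text \<open>Local description of Leg F off its discriminant on an open set U of the (p,q)-chart:
  d pairwise distinct holomorphic root branches X 0, ..., X (d-1).\<close>
definition leg_branches ::
  "(nat \<Rightarrow> complex) \<Rightarrow> (nat \<Rightarrow> complex) \<Rightarrow> nat \<Rightarrow> (complex \<times> complex) set \<Rightarrow>
   (nat \<Rightarrow> complex \<times> complex \<Rightarrow> complex) \<Rightarrow> bool" where
  "leg_branches a b d U X \<longleftrightarrow> open U \<and>
     (\<forall>i<d. continuous_on U (X i) \<and> sep_holo_on U (X i)) \<and>
     (\<forall>z\<in>U. \<forall>i<d. leg_poly a b d (fst z) (snd z) (X i z) = 0) \<and>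
     (\<forall>z\<in>U. \<forall>i<d. \<forall>j<d. i \<noteq> j \<longrightarrow> X i z \<noteq> X j z)"

text \<open>K(Leg F) = k dp wedge dq at the point z of the (p,q)-chart (z off the discriminant).\<close>
definition leg_curv_at :: "(nat \<Rightarrow> complex) \<Rightarrow> (nat \<Rightarrow> complex) \<Rightarrow> nat \<Rightarrow> complex \<times> complex \<Rightarrow> complex \<Rightarrow> bool" where
  "leg_curv_at a b d z k \<longleftrightarrow> (\<exists>U X. z \<in> U \<and> leg_branches a b d U X \<and> k = web_curv d X z)"

text \<open>The dual plane minus the dual line of O is the affine chart (u,v) of lines
  u x + v y + 1 = 0; on v \<noteq> 0 this is the line y = p x + q with p = -u/v, q = -1/v,
  and dp wedge dq = -(1/v^3) du wedge dv.  K(Leg F) is holomorphic there iff its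
  coefficient in (u,v) extends to a holomorphic function on all of C^2.\<close>
definition leg_curv_holo_off_dualO :: "(nat \<Rightarrow> complex) \<Rightarrow> (nat \<Rightarrow> complex) \<Rightarrow> nat \<Rightarrow> bool" where
  "leg_curv_holo_off_dualO a b d \<longleftrightarrow>
     (\<exists>g. continuous_on UNIV g \<and> sep_holo_on UNIV g \<and>
        (\<forall>u v k. v \<noteq> 0 \<longrightarrow> leg_curv_at a b d (- u / v, - 1 / v) k \<longrightarrow> g (u, v) = - k / v ^ 3))"

end

theory Submission
  imports Defs "HOL-Computational_Algebra.Fundamental_Theorem_Algebra"
    "HOL-Complex_Analysis.Cauchy_Integral_Formula"
begin

text \<open>The equation of \<open>Leg F\<close> is homogeneous: \<open>leg_poly p (s q) (s x) = s\<^sup>d leg_poly p q x\<close>.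
  Hence, off the discriminant, the root branches have the form \<open>x\<^sub>i(p,q) = q \<rho>\<^sub>i(p)\<close>, and a
  direct computation gives \<open>K = \<kappa>(p)/q dp\<and>dq\<close> with \<open>\<kappa>\<close> independent of \<open>q\<close>. In the chart
  \<open>(u,v)\<close> of the dual plane minus the dual line of \<open>O\<close> (\<open>p = -u/v\<close>, \<open>q = -1/v\<close>) the
  coefficient of \<open>du\<and>dv\<close> is \<open>\<kappa>(p)/v\<^sup>2\<close>, which stays bounded along \<open>u = -p v\<close> as
  \<open>v \<rightarrow> 0\<close> only if \<open>\<kappa>(p) = 0\<close>. The points \<open>q = 0\<close> (the lines through \<open>O\<close>) lie in the
  discriminant: there the \<open>d\<close> roots either all collapse to \<open>0\<close> or are fewer than \<open>d\<close>.\<close>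

subsection \<open>Homogeneity of the Legendre equation\<close>

lemma hom_form_scale: "hom_form c d (s * x) (s * y) = s ^ d * hom_form c d x y"
  unfolding hom_form_def sum_distrib_left
proof (rule sum.cong[OF refl])
  fix i assume "i \<in> {..d}"
  then have "s ^ d = s ^ i * s ^ (d - i)" by (simp add: power_add[symmetric])
  then show "c i * (s * x) ^ i * (s * y) ^ (d - i) = s ^ d * (c i * x ^ i * y ^ (d - i))"
    by (simp add: power_mult_distrib)
qed

lemma leg_poly_scale: "leg_poly a b d p (s * q) (s * x) = s ^ d * leg_poly a b d p q x"
proof -
  have "p * (s * x) + s * q = s * (p * x + q)" by (simp add: algebra_simps)
  then show ?thesis
    unfolding leg_poly_def by (simp only: hom_form_scale) (simp add: algebra_simps)
qed

lemma leg_poly_root_div: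
  assumes "leg_poly a b d p q x = 0" and "q \<noteq> 0"
  shows "leg_poly a b d p 1 (x / q) = 0"
  using leg_poly_scale[of a b d p q 1 "x / q"] assms by simp

lemma leg_poly_root_mult:
  assumes "leg_poly a b d p 1 x = 0"
  shows "leg_poly a b d p q (q * x) = 0"
  using leg_poly_scale[of a b d p q 1 x] assms by simp

lemma leg_poly_q0: "leg_poly a b d p 0 x = x ^ d * leg_poly a b d p 0 1"
  using leg_poly_scale[of a b d p x 0 1] by simp

lemma leg_poly_eq_0_if_vanishes_on_q1:
  assumes "\<forall>x. leg_poly a b d p 1 x = 0" and "leg_poly a b d p 0 1 = 0"
  shows "leg_poly a b d p q x = 0"
proof (cases "q = 0")
  case True
  then show ?thesis using assms(2) leg_poly_q0[of a b d p x] by simp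
next
  case False
  then show ?thesis using leg_poly_scale[of a b d p q 1 "x / q"] assms(1) by simp
qed

lemma hom_form_nontrivial_zero:
  assumes "d \<ge> 1"
  obtains x y where "hom_form c d x y = 0" and "(x, y) \<noteq> (0, 0)"
proof (cases "c d = 0")
  case True
  have "hom_form c d 1 0 = (\<Sum>i\<le>d. if i = d then c d else 0)"
    unfolding hom_form_def by (intro sum.cong refl) auto
  with True have "hom_form c d 1 0 = 0" by simp
  then show ?thesis by (rule that) simp
next
  case False
  define P where "P = (\<Sum>i\<le>d. monom (c i) i)"
  have poly_P: "poly P t = hom_form c d t 1" for t
    unfolding P_def hom_form_def by (simp add: poly_sum poly_monom mult.commute)
  have "coeff P d = (\<Sum>i\<le>d. if i = d then c i else 0)"
    unfolding P_def coeff_sum by (intro sum.cong refl) (auto simp: coeff_monom)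
  then have "coeff P d = c d" by simp
  with False have "degree P \<ge> d" by (simp add: le_degree)
  with assms have "\<not> constant (poly P)" using constant_degree[of P] by simp
  then obtain t where "poly P t = 0" using Fundamental_Theorem_Algebra.fundamental_theorem_of_algebra[of P] by blast
  then have "hom_form c d t 1 = 0" by (simp add: poly_P)
  then show ?thesis by (rule that) simp
qed

lemma degree_pCons_1_power_le: "degree ([:1, p:] ^ n) \<le> n"
  by (rule order_trans[OF degree_power_le]) simp

lemma coeff_pCons_1_power: "coeff ([:1, p:] ^ n) n = p ^ n"
proof (induction n)
  case 0
  then show ?case by simp
next
  case (Suc n)
  have "degree ([:1, p:] ^ n) \<le> n" by (rule degree_pCons_1_power_le)
  then have "coeff ([:1, p:] ^ n) (Suc n) = 0" by (simp add: coeff_eq_0)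
  then show ?case using Suc.IH by (simp add: mult_pCons_left)
qed

definition line_poly :: "(nat \<Rightarrow> complex) \<Rightarrow> nat \<Rightarrow> complex \<Rightarrow> complex poly" where
  "line_poly c d p = (\<Sum>i\<le>d. smult (c i) (monom 1 i * [:1, p:] ^ (d - i)))"

lemma poly_line_poly: "poly (line_poly c d p) x = hom_form c d x (p * x + 1)"
  unfolding line_poly_def hom_form_def by (simp add: poly_sum poly_monom algebra_simps)

lemma degree_line_poly: "degree (line_poly c d p) \<le> d"
  unfolding line_poly_def
proof (rule degree_sum_le[OF finite_atMost])
  fix i assume i: "i \<in> {..d}"
  have "degree (monom (1::complex) i * [:1, p:] ^ (d - i))
          \<le> degree (monom (1::complex) i) + degree ([:1, p:] ^ (d - i))"
    by (rule degree_mult_le)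
  also have "\<dots> \<le> i + (d - i)"
    using degree_pCons_1_power_le[of p "d - i"] by (simp add: degree_monom_eq)
  also have "\<dots> = d" using i by simp
  finally show "degree (smult (c i) (monom 1 i * [:1, p:] ^ (d - i))) \<le> d"
    by (rule order_trans[OF degree_smult_le])
qed

lemma coeff_line_poly: "coeff (line_poly c d p) d = hom_form c d 1 p"
  unfolding line_poly_def hom_form_def coeff_sum
  by (intro sum.cong refl) (simp add: coeff_monom_mult coeff_pCons_1_power)

definition leg_line_poly :: "(nat \<Rightarrow> complex) \<Rightarrow> (nat \<Rightarrow> complex) \<Rightarrow> nat \<Rightarrow> complex \<Rightarrow> complex poly"
  where "leg_line_poly a b d p = line_poly b d p - smult p (line_poly a d p)"

lemma poly_leg_line_poly: "poly (leg_line_poly a b d p) x = leg_poly a b d p 1 x"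
  unfolding leg_line_poly_def leg_poly_def by (simp add: poly_line_poly)

lemma degree_leg_line_poly: "degree (leg_line_poly a b d p) \<le> d"
  unfolding leg_line_poly_def using degree_line_poly
  by (intro degree_diff_le order_trans[OF degree_smult_le]) auto

lemma coeff_leg_line_poly: "coeff (leg_line_poly a b d p) d = leg_poly a b d p 0 1"
  unfolding leg_line_poly_def leg_poly_def by (simp add: coeff_line_poly)

text \<open>Otherwise \<open>B = p A\<close> identically, and a nontrivial zero of \<open>A\<close> is a common zero of \<open>A\<close>, \<open>B\<close>.\<close>

lemma leg_line_poly_nonzero:
  assumes hf: "homogeneous_foliation a b d" and "d \<ge> 1"
  shows "leg_line_poly a b d p \<noteq> 0"
proof
  assume P0: "leg_line_poly a b d p = 0"
  have vanish: "leg_poly a b d p q x = 0" for q x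
  proof (rule leg_poly_eq_0_if_vanishes_on_q1)
    show "\<forall>x. leg_poly a b d p 1 x = 0" using P0 poly_leg_line_poly[of a b d p] by simp
    show "leg_poly a b d p 0 1 = 0" using P0 coeff_leg_line_poly[of a b d p] by simp
  qed
  obtain x y where A0: "hom_form a d x y = 0" and xy: "(x, y) \<noteq> (0, 0)"
    using hom_form_nontrivial_zero \<open>d \<ge> 1\<close> by blast
  have "leg_poly a b d p (y - p * x) x = 0" by (rule vanish)
  then have "hom_form b d x y = 0" using A0 by (simp add: leg_poly_def)
  with A0 xy hf show False unfolding homogeneous_foliation_def by blast
qed

lemma finite_leg_roots:
  assumes "homogeneous_foliation a b d" and "d \<ge> 1"
  shows "finite {x. leg_poly a b d p 1 x = 0}"
  using poly_roots_finite[OF leg_line_poly_nonzero[OF assms]] by (simp add: poly_leg_line_poly)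

lemma leg_root_ratio_constant:
  assumes "homogeneous_foliation a b d" and "d \<ge> 1"
    and S: "connected S" "0 \<notin> S" and x: "continuous_on S x"
    and roots: "\<forall>t\<in>S. leg_poly a b d p t (x t) = 0"
    and "s \<in> S" "t \<in> S"
  shows "x s / s = x t / t"
proof -
  have "continuous_on S (\<lambda>t. x t / t)"
    using x S(2) by (intro continuous_intros) auto
  moreover have "(\<lambda>t. x t / t) ` S \<subseteq> {y. leg_poly a b d p 1 y = 0}"
    using roots S(2) by (auto intro: leg_poly_root_div)
  then have "finite ((\<lambda>t. x t / t) ` S)"
    using finite_leg_roots[OF assms(1,2)] finite_subset by blast
  ultimately have "(\<lambda>t. x t / t) constant_on S"
    using continuous_finite_range_constant[OF S(1)] by blast
  with assms(7,8) show ?thesis unfolding constant_on_def by metis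
qed

lemma eventually_nhds_slice_fst:
  assumes "open N" "(x, y) \<in> N"
  shows "eventually (\<lambda>t. (t, y) \<in> N) (nhds x)"
proof -
  have "((\<lambda>t. (t, y)) \<longlongrightarrow> (x, y)) (nhds x)"
    by (intro tendsto_Pair filterlim_ident tendsto_const)
  with assms show ?thesis unfolding tendsto_def by auto
qed

lemma eventually_nhds_slice_snd:
  assumes "open N" "(x, y) \<in> N"
  shows "eventually (\<lambda>t. (x, t) \<in> N) (nhds y)"
proof -
  have "((\<lambda>t. (x, t)) \<longlongrightarrow> (x, y)) (nhds y)"
    by (intro tendsto_Pair filterlim_ident tendsto_const)
  with assms show ?thesis unfolding tendsto_def by auto
qed

lemma dP_eq_locally:
  assumes "open N" "w \<in> N" "\<forall>v\<in>N. g v = G (fst v) (snd v)"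
    and "((\<lambda>t. G t (snd w)) has_field_derivative D) (at (fst w))"
  shows "dP g w = D"
proof -
  have "eventually (\<lambda>t. g (t, snd w) = G t (snd w)) (nhds (fst w))"
    using eventually_nhds_slice_fst[of N "fst w" "snd w"] assms(1-3)
    by (auto elim: eventually_mono)
  then have "dP g w = deriv (\<lambda>t. G t (snd w)) (fst w)"
    unfolding dP_def by (rule deriv_cong_ev) simp
  with DERIV_imp_deriv[OF assms(4)] show ?thesis by simp
qed

lemma dQ_eq_locally:
  assumes "open N" "w \<in> N" "\<forall>v\<in>N. g v = G (fst v) (snd v)"
    and "((\<lambda>t. G (fst w) t) has_field_derivative D) (at (snd w))"
  shows "dQ g w = D"
proof -
  have "eventually (\<lambda>t. g (fst w, t) = G (fst w) t) (nhds (snd w))"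
    using eventually_nhds_slice_snd[of N "fst w" "snd w"] assms(1-3)
    by (auto elim: eventually_mono)
  then have "dQ g w = deriv (\<lambda>t. G (fst w) t) (snd w)"
    unfolding dQ_def by (rule deriv_cong_ev) simp
  with DERIV_imp_deriv[OF assms(4)] show ?thesis by simp
qed

subsection \<open>Curvature of webs whose slopes are homogeneous in \<open>q\<close>\<close>

definition web3_c ::
  "(complex \<times> complex \<Rightarrow> complex) \<Rightarrow> (complex \<times> complex \<Rightarrow> complex) \<Rightarrow> complex \<times> complex \<Rightarrow> complex"
  where "web3_c l x w = (dP l w - dQ (\<lambda>v. l v * x v) w) / l w"

definition web3_f ::
  "(complex \<times> complex \<Rightarrow> complex) \<Rightarrow> (complex \<times> complex \<Rightarrow> complex) \<Rightarrow>
   (complex \<times> complex \<Rightarrow> complex) \<Rightarrow> complex \<times> complex \<Rightarrow> complex"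
  where "web3_f x1 x2 x3 w =
    (web3_c (\<lambda>w. x2 w - x3 w) x1 w - web3_c (\<lambda>w. x3 w - x1 w) x2 w) / (x2 w - x1 w)"

definition web3_e ::
  "(complex \<times> complex \<Rightarrow> complex) \<Rightarrow> (complex \<times> complex \<Rightarrow> complex) \<Rightarrow>
   (complex \<times> complex \<Rightarrow> complex) \<Rightarrow> complex \<times> complex \<Rightarrow> complex"
  where "web3_e x1 x2 x3 w = web3_c (\<lambda>w. x2 w - x3 w) x1 w + x1 w * web3_f x1 x2 x3 w"

lemma web3_curv_eq: "web3_curv x1 x2 x3 z = dP (web3_f x1 x2 x3) z - dQ (web3_e x1 x2 x3) z"
  unfolding web3_curv_def Let_def web3_f_def[abs_def] web3_e_def[abs_def] web3_c_def[abs_def]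
  by simp

text \<open>The values of \<^const>\<open>web3_c\<close> and \<^const>\<open>web3_f\<close> for slopes \<open>x\<^sub>i(p,q) = q r\<^sub>i(p)\<close>.\<close>

definition hom_web3_c ::
  "(complex \<Rightarrow> complex) \<Rightarrow> (complex \<Rightarrow> complex) \<Rightarrow> (complex \<Rightarrow> complex) \<Rightarrow> complex \<Rightarrow> complex"
  where "hom_web3_c r1 r2 r3 t = (deriv r2 t - deriv r3 t) / (r2 t - r3 t) - 2 * r1 t"

definition hom_web3_f ::
  "(complex \<Rightarrow> complex) \<Rightarrow> (complex \<Rightarrow> complex) \<Rightarrow> (complex \<Rightarrow> complex) \<Rightarrow> complex \<Rightarrow> complex"
  where "hom_web3_f r1 r2 r3 t = (hom_web3_c r1 r2 r3 t - hom_web3_c r2 r3 r1 t) / (r2 t - r1 t)"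

definition hom_web_curv :: "nat \<Rightarrow> (nat \<Rightarrow> complex \<Rightarrow> complex) \<Rightarrow> complex \<Rightarrow> complex" where
  "hom_web_curv d \<rho> p =
     (\<Sum>(i,j,k)\<in>{(i,j,k). i < j \<and> j < k \<and> k < d}. deriv (hom_web3_f (\<rho> i) (\<rho> j) (\<rho> k)) p)"

lemma hom_web3_c_holomorphic:
  assumes "open B" "r1 holomorphic_on B" "r2 holomorphic_on B" "r3 holomorphic_on B"
    and "\<forall>t\<in>B. r2 t \<noteq> r3 t"
  shows "hom_web3_c r1 r2 r3 holomorphic_on B"
proof -
  have "deriv r2 holomorphic_on B" "deriv r3 holomorphic_on B"
    using assms holomorphic_deriv by auto
  with assms have "(\<lambda>t. (deriv r2 t - deriv r3 t) / (r2 t - r3 t) - 2 * r1 t) holomorphic_on B"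
    by (intro holomorphic_intros) auto
  then show ?thesis unfolding hom_web3_c_def[abs_def] .
qed

lemma hom_web3_f_holomorphic:
  assumes "open B" "r1 holomorphic_on B" "r2 holomorphic_on B" "r3 holomorphic_on B"
    and "\<forall>t\<in>B. r1 t \<noteq> r2 t \<and> r2 t \<noteq> r3 t \<and> r1 t \<noteq> r3 t"
  shows "hom_web3_f r1 r2 r3 holomorphic_on B"
proof -
  have "hom_web3_c r1 r2 r3 holomorphic_on B" "hom_web3_c r2 r3 r1 holomorphic_on B"
    using assms by (auto intro!: hom_web3_c_holomorphic)
  with assms have
    "(\<lambda>t. (hom_web3_c r1 r2 r3 t - hom_web3_c r2 r3 r1 t) / (r2 t - r1 t)) holomorphic_on B"
    by (intro holomorphic_intros) auto
  then show ?thesis unfolding hom_web3_f_def[abs_def] .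
qed

lemma web3_c_homogeneous:
  assumes B: "open B" and N: "open N" "N \<subseteq> B \<times> - {0}"
    and holo: "r1 holomorphic_on B" "r2 holomorphic_on B" "r3 holomorphic_on B"
    and ne: "\<forall>t\<in>B. r2 t \<noteq> r3 t"
    and x1: "\<forall>w\<in>N. x1 w = snd w * r1 (fst w)"
    and x2: "\<forall>w\<in>N. x2 w = snd w * r2 (fst w)"
    and x3: "\<forall>w\<in>N. x3 w = snd w * r3 (fst w)"
    and w: "w \<in> N"
  shows "web3_c (\<lambda>w. x2 w - x3 w) x1 w = hom_web3_c r1 r2 r3 (fst w)"
proof -
  obtain t q where wtq: "w = (t, q)" by fastforce
  with N(2) w have t: "t \<in> B" and q: "q \<noteq> 0" by auto
  have d2: "(r2 has_field_derivative deriv r2 t) (at t)"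
    and d3: "(r3 has_field_derivative deriv r3 t) (at t)"
    using holo(2,3) B t by (auto intro!: DERIV_deriv_iff_field_differentiable[THEN iffD2]
        holomorphic_on_imp_differentiable_at)
  have dP_l: "dP (\<lambda>w. x2 w - x3 w) w = q * (deriv r2 t - deriv r3 t)"
  proof (rule dP_eq_locally[where G = "\<lambda>t q. q * (r2 t - r3 t)", OF N(1) w])
    show "\<forall>v\<in>N. x2 v - x3 v = snd v * (r2 (fst v) - r3 (fst v))"
      using x2 x3 by (simp add: algebra_simps)
    show "((\<lambda>t. snd w * (r2 t - r3 t)) has_field_derivative q * (deriv r2 t - deriv r3 t))
            (at (fst w))"
      using DERIV_cmult[OF DERIV_diff[OF d2 d3], of q] wtq by simp
  qed
  have dQ_lx: "dQ (\<lambda>v. (x2 v - x3 v) * x1 v) w = 2 * q * ((r2 t - r3 t) * r1 t)"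
  proof (rule dQ_eq_locally[where G = "\<lambda>t q. q\<^sup>2 * ((r2 t - r3 t) * r1 t)", OF N(1) w])
    show "\<forall>v\<in>N. (x2 v - x3 v) * x1 v = (snd v)\<^sup>2 * ((r2 (fst v) - r3 (fst v)) * r1 (fst v))"
      using x1 x2 x3 by (simp add: algebra_simps power2_eq_square)
    show "((\<lambda>s. s\<^sup>2 * ((r2 (fst w) - r3 (fst w)) * r1 (fst w)))
            has_field_derivative 2 * q * ((r2 t - r3 t) * r1 t)) (at (snd w))"
      unfolding wtq by (auto intro!: derivative_eq_intros)
  qed
  have l: "x2 w - x3 w = q * (r2 t - r3 t)"
    using x2 x3 w wtq by (simp add: algebra_simps)
  have "r2 t - r3 t \<noteq> 0" using ne t by simp
  then show ?thesis
    unfolding web3_c_def dP_l dQ_lx l hom_web3_c_def using q wtq by (simp add: field_simps)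
qed

text \<open>\<open>f = F(p)/q\<close> and \<open>e\<close> depends on \<open>p\<close> only, so \<open>K = F'(p)/q\<close>.\<close>

lemma web3_curv_homogeneous:
  assumes B: "open B" and N: "open N" "N \<subseteq> B \<times> - {0}"
    and holo: "r1 holomorphic_on B" "r2 holomorphic_on B" "r3 holomorphic_on B"
    and ne: "\<forall>t\<in>B. r1 t \<noteq> r2 t \<and> r2 t \<noteq> r3 t \<and> r1 t \<noteq> r3 t"
    and x1: "\<forall>w\<in>N. x1 w = snd w * r1 (fst w)"
    and x2: "\<forall>w\<in>N. x2 w = snd w * r2 (fst w)"
    and x3: "\<forall>w\<in>N. x3 w = snd w * r3 (fst w)"
    and z: "z \<in> N"
  shows "web3_curv x1 x2 x3 z = deriv (hom_web3_f r1 r2 r3) (fst z) / snd z"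
proof -
  have c1: "web3_c (\<lambda>w. x2 w - x3 w) x1 v = hom_web3_c r1 r2 r3 (fst v)" if "v \<in> N" for v
    using web3_c_homogeneous[OF B N holo _ x1 x2 x3 that] ne by auto
  have c2: "web3_c (\<lambda>w. x3 w - x1 w) x2 v = hom_web3_c r2 r3 r1 (fst v)" if "v \<in> N" for v
    using web3_c_homogeneous[OF B N holo(2,3,1) _ x2 x3 x1 that] ne by fastforce
  have f: "\<forall>v\<in>N. web3_f x1 x2 x3 v = hom_web3_f r1 r2 r3 (fst v) / snd v"
  proof
    fix v assume v: "v \<in> N"
    have "x2 v - x1 v = snd v * (r2 (fst v) - r1 (fst v))"
      using x1 x2 v by (simp add: algebra_simps)
    then show "web3_f x1 x2 x3 v = hom_web3_f r1 r2 r3 (fst v) / snd v"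
      unfolding web3_f_def hom_web3_f_def c1[OF v] c2[OF v] by simp
  qed
  have e: "\<forall>v\<in>N. web3_e x1 x2 x3 v =
             hom_web3_c r1 r2 r3 (fst v) + r1 (fst v) * hom_web3_f r1 r2 r3 (fst v)"
    using N(2) x1 c1 f unfolding web3_e_def by auto
  have "fst z \<in> B" "snd z \<noteq> 0" using N(2) z by auto
  moreover have "hom_web3_f r1 r2 r3 holomorphic_on B"
    using hom_web3_f_holomorphic[OF B holo ne] .
  ultimately have dF: "(hom_web3_f r1 r2 r3 has_field_derivative
                         deriv (hom_web3_f r1 r2 r3) (fst z)) (at (fst z))"
    using B by (auto intro!: DERIV_deriv_iff_field_differentiable[THEN iffD2]
        holomorphic_on_imp_differentiable_at)
  have "dP (web3_f x1 x2 x3) z = deriv (hom_web3_f r1 r2 r3) (fst z) / snd z"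
    by (rule dP_eq_locally[where G = "\<lambda>t q. hom_web3_f r1 r2 r3 t / q", OF N(1) z f])
      (use DERIV_cdivide[OF dF, of "snd z"] in simp)
  moreover have "dQ (web3_e x1 x2 x3) z = 0"
    by (rule dQ_eq_locally[OF N(1) z e]) simp
  ultimately show ?thesis unfolding web3_curv_eq by simp
qed

lemma web_curv_homogeneous:
  assumes B: "open B" and N: "open N" "N \<subseteq> B \<times> - {0}"
    and holo: "\<forall>i<d. \<rho> i holomorphic_on B"
    and ne: "\<forall>t\<in>B. \<forall>i<d. \<forall>j<d. i \<noteq> j \<longrightarrow> \<rho> i t \<noteq> \<rho> j t"
    and X: "\<forall>w\<in>N. \<forall>i<d. X i w = snd w * \<rho> i (fst w)"
    and z: "z \<in> N"
  shows "web_curv d X z = hom_web_curv d \<rho> (fst z) / snd z"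
  unfolding web_curv_def hom_web_curv_def sum_divide_distrib
proof (rule sum.cong[OF refl], clarify)
  fix i j k assume ijk: "i < j" "j < k" "k < d"
  show "web3_curv (X i) (X j) (X k) z = deriv (hom_web3_f (\<rho> i) (\<rho> j) (\<rho> k)) (fst z) / snd z"
    by (rule web3_curv_homogeneous[OF B N _ _ _ _ _ _ _ z]) (use holo ne X ijk in auto)
qed

lemma web_curv_eq_0_if_less_3: "d < 3 \<Longrightarrow> web_curv d X z = 0"
  unfolding web_curv_def by (rule sum.neutral) auto

subsection \<open>The root branches of the Legendre web\<close>

text \<open>Branches of \<open>Leg F\<close> along the lines \<open>q = 1\<close>, i.e.\ the profiles \<open>\<rho>\<^sub>i\<close> of \<open>x\<^sub>i = q \<rho>\<^sub>i(p)\<close>.\<close>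

definition leg_profiles ::
  "(nat \<Rightarrow> complex) \<Rightarrow> (nat \<Rightarrow> complex) \<Rightarrow> nat \<Rightarrow> complex set \<Rightarrow> (nat \<Rightarrow> complex \<Rightarrow> complex) \<Rightarrow> bool"
  where "leg_profiles a b d B \<rho> \<longleftrightarrow> open B \<and>
     (\<forall>i<d. \<rho> i holomorphic_on B) \<and>
     (\<forall>t\<in>B. \<forall>i<d. leg_poly a b d t 1 (\<rho> i t) = 0) \<and>
     (\<forall>t\<in>B. \<forall>i<d. \<forall>j<d. i \<noteq> j \<longrightarrow> \<rho> i t \<noteq> \<rho> j t)"

lemma leg_branches_of_profiles:
  assumes "leg_profiles a b d B \<rho>"
  shows "leg_branches a b d (B \<times> - {0}) (\<lambda>i w. snd w * \<rho> i (fst w))"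
proof -
  have B: "open B" and holo: "\<forall>i<d. \<rho> i holomorphic_on B"
    and roots: "\<forall>t\<in>B. \<forall>i<d. leg_poly a b d t 1 (\<rho> i t) = 0"
    and ne: "\<forall>t\<in>B. \<forall>i<d. \<forall>j<d. i \<noteq> j \<longrightarrow> \<rho> i t \<noteq> \<rho> j t"
    using assms unfolding leg_profiles_def by auto
  show ?thesis
    unfolding leg_branches_def
  proof (intro conjI ballI allI impI)
    show "open (B \<times> - {0::complex})" using B by (intro open_Times) auto
  next
    fix i assume i: "i < d"
    have "continuous_on B (\<rho> i)" using holo i holomorphic_on_imp_continuous_on by blast
    then have "continuous_on (B \<times> - {0}) (\<lambda>w. \<rho> i (fst w))"
      by (rule continuous_on_compose2[OF _ continuous_on_fst]) auto
    then show "continuous_on (B \<times> - {0}) (\<lambda>w. snd w * \<rho> i (fst w))"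
      by (intro continuous_intros)
    show "sep_holo_on (B \<times> - {0}) (\<lambda>w. snd w * \<rho> i (fst w))"
      unfolding sep_holo_on_def
    proof
      fix w :: "complex \<times> complex" assume "w \<in> B \<times> - {0}"
      then have "fst w \<in> B" by auto
      moreover have "(\<lambda>t. snd w * \<rho> i t) holomorphic_on B"
        using holo i by (intro holomorphic_intros) auto
      ultimately have "(\<lambda>t. snd w * \<rho> i t) field_differentiable at (fst w)"
        using B holomorphic_on_imp_differentiable_at by blast
      moreover have "(\<lambda>t. t * \<rho> i (fst w)) field_differentiable at (snd w)"
        by (intro derivative_intros)
      ultimately show "(\<lambda>t. snd (t, snd w) * \<rho> i (fst (t, snd w))) field_differentiable at (fst w) \<and>
          (\<lambda>t. snd (fst w, t) * \<rho> i (fst (fst w, t))) field_differentiable at (snd w)"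
        by simp
    qed
  next
    fix w :: "complex \<times> complex" and i assume "w \<in> B \<times> - {0}" "i < d"
    then show "leg_poly a b d (fst w) (snd w) (snd w * \<rho> i (fst w)) = 0"
      using roots by (auto intro: leg_poly_root_mult)
  next
    fix w :: "complex \<times> complex" and i j assume "w \<in> B \<times> - {0}" "i < d" "j < d" "i \<noteq> j"
    then show "snd w * \<rho> i (fst w) \<noteq> snd w * \<rho> j (fst w)" using ne by auto
  qed
qed

text \<open>The ratio \<open>x\<^sub>i(p,q)/q\<close> is a root of the degree \<open>\<le> d\<close> polynomial \<^const>\<open>leg_line_poly\<close>
  and varies continuously in \<open>q\<close>, hence is locally constant in \<open>q\<close>.\<close>

lemma leg_branches_locally_homogeneous:
  assumes hf: "homogeneous_foliation a b d" and d: "d \<ge> 1"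
    and lb: "leg_branches a b d U X" and pq: "(p, q) \<in> U" and q: "q \<noteq> 0"
  obtains B N \<rho> where "leg_profiles a b d B \<rho>" "open N" "(p, q) \<in> N" "N \<subseteq> B \<times> - {0}"
    and "\<forall>w\<in>N. \<forall>i<d. X i w = snd w * \<rho> i (fst w)"
proof -
  have U: "open U" and cont: "\<forall>i<d. continuous_on U (X i)" and sh: "\<forall>i<d. sep_holo_on U (X i)"
    and roots: "\<forall>z\<in>U. \<forall>i<d. leg_poly a b d (fst z) (snd z) (X i z) = 0"
    and ne: "\<forall>z\<in>U. \<forall>i<d. \<forall>j<d. i \<noteq> j \<longrightarrow> X i z \<noteq> X j z"
    using lb unfolding leg_branches_def by auto
  obtain B Q where B: "open B" and Q: "open Q" and pqBQ: "(p, q) \<in> B \<times> Q" and BQ: "B \<times> Q \<subseteq> U"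
    by (rule open_prod_elim[OF U pq])
  have "open (Q - {0})" "q \<in> Q - {0}" using Q pqBQ q by (auto simp: open_Diff)
  then obtain e where e: "e > 0" "ball q e \<subseteq> Q - {0}" using open_contains_ball by blast
  define N where "N = B \<times> ball q e"
  define \<rho> where "\<rho> i t = X i (t, q) / q" for i t
  have N0: "N \<subseteq> B \<times> - {0}" using e(2) unfolding N_def by blast
  have slice: "(t, s) \<in> U" if "t \<in> B" "s \<in> ball q e" for t s using BQ e(2) that by blast
  have BU: "(t, q) \<in> U" if "t \<in> B" for t using slice that e(1) by simp
  have homog: "X i w = snd w * \<rho> i (fst w)" if w: "w \<in> N" and i: "i < d" for w i
  proof -
    obtain t s where wts: "w = (t, s)" and t: "t \<in> B" and s: "s \<in> ball q e"
      using w unfolding N_def by blast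
    have "X i (t, s) / s = X i (t, q) / q"
    proof (rule leg_root_ratio_constant[OF hf d])
      show "connected (ball q e)" "q \<in> ball q e" using e(1) by auto
      show "0 \<notin> ball q e" using e(2) by blast
      show "continuous_on (ball q e) (\<lambda>s. X i (t, s))"
      proof (rule continuous_on_compose2[of U "X i"])
        show "continuous_on U (X i)" using cont i by simp
        show "continuous_on (ball q e) (\<lambda>s. (t, s))" by (intro continuous_intros)
        show "(\<lambda>s. (t, s)) ` ball q e \<subseteq> U" using slice[OF t] by blast
      qed
      show "\<forall>s\<in>ball q e. leg_poly a b d t s (X i (t, s)) = 0"
        using roots[rule_format, OF slice[OF t] i] by simp
    qed (fact s)
    moreover have "s \<noteq> 0" using s e(2) by blast
    ultimately have "X i (t, s) = \<rho> i t * s" by (simp add: \<rho>_def divide_eq_eq)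
    then show ?thesis by (simp add: wts)
  qed
  have "leg_profiles a b d B \<rho>" unfolding leg_profiles_def
  proof (intro conjI allI impI ballI B)
    fix i assume i: "i < d"
    show "\<rho> i holomorphic_on B"
      unfolding holomorphic_on_def
    proof
      fix t assume "t \<in> B"
      then have "(\<lambda>s. X i (s, q)) field_differentiable at t"
        using sh i BU unfolding sep_holo_on_def by fastforce
      then have "\<rho> i field_differentiable at t"
        unfolding \<rho>_def[abs_def] using q by (intro field_differentiable_divide) auto
      then show "\<rho> i field_differentiable at t within B"
        by (rule field_differentiable_at_within)
    qed
  next
    fix t i assume "t \<in> B" "i < d"
    then show "leg_poly a b d t 1 (\<rho> i t) = 0"
      unfolding \<rho>_def using roots BU q leg_poly_root_div by fastforce
  next
    fix t i j assume "t \<in> B" "i < d" "j < d" "i \<noteq> j"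
    then show "\<rho> i t \<noteq> \<rho> j t" unfolding \<rho>_def using ne BU q by fastforce
  qed
  moreover have "open N" unfolding N_def using B by (intro open_Times) auto
  moreover have "(p, q) \<in> N" unfolding N_def using pqBQ e(1) by auto
  ultimately show ?thesis using that N0 homog by blast
qed

lemma leg_curv_at_homogeneous:
  assumes hf: "homogeneous_foliation a b d" and d: "d \<ge> 1"
    and curv: "leg_curv_at a b d (p, q) k" and q: "q \<noteq> 0"
  obtains \<kappa> where "k = \<kappa> / q" and "\<forall>q'. q' \<noteq> 0 \<longrightarrow> leg_curv_at a b d (p, q') (\<kappa> / q')"
proof -
  obtain U X where pq: "(p, q) \<in> U" and lb: "leg_branches a b d U X"
    and k: "k = web_curv d X (p, q)"
    using curv unfolding leg_curv_at_def by blast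
  obtain B N \<rho> where prof: "leg_profiles a b d B \<rho>" and N: "open N" "(p, q) \<in> N"
    "N \<subseteq> B \<times> - {0}" and X: "\<forall>w\<in>N. \<forall>i<d. X i w = snd w * \<rho> i (fst w)"
    by (rule leg_branches_locally_homogeneous[OF hf d lb pq q])
  have B: "open B" and holo: "\<forall>i<d. \<rho> i holomorphic_on B"
    and ne: "\<forall>t\<in>B. \<forall>i<d. \<forall>j<d. i \<noteq> j \<longrightarrow> \<rho> i t \<noteq> \<rho> j t"
    using prof unfolding leg_profiles_def by auto
  have "k = hom_web_curv d \<rho> p / q"
    using web_curv_homogeneous[OF B N(1,3) holo ne X N(2)] k by simp
  moreover have "leg_curv_at a b d (p, q') (hom_web_curv d \<rho> p / q')" if "q' \<noteq> 0" for q'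
  proof -
    let ?X = "\<lambda>i w. snd w * \<rho> i (fst w)"
    have opn: "open (B \<times> - {0::complex})" using B by (intro open_Times) auto
    have pq': "(p, q') \<in> B \<times> - {0}" using N(2,3) that by auto
    have "web_curv d ?X (p, q') = hom_web_curv d \<rho> p / q'"
      using web_curv_homogeneous[OF B opn subset_refl holo ne _ pq'] by simp
    with pq' show ?thesis
      unfolding leg_curv_at_def using leg_branches_of_profiles[OF prof] by metis
  qed
  ultimately show ?thesis using that by blast
qed

text \<open>A line through \<open>O\<close> is never a regular point: either all roots of \<open>leg_poly p 0\<close> are
  \<open>0\<close>, or its leading coefficient vanishes and nearby points \<open>(p, q)\<close> have fewer than \<open>d\<close>
  roots.\<close>

lemma leg_branches_avoid_dual_O:
  assumes hf: "homogeneous_foliation a b d" and d: "d \<ge> 2"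
    and lb: "leg_branches a b d U X"
  shows "(p, 0) \<notin> U"
proof
  assume p0: "(p, 0) \<in> U"
  have U: "open U" and roots: "\<forall>z\<in>U. \<forall>i<d. leg_poly a b d (fst z) (snd z) (X i z) = 0"
    and ne: "\<forall>z\<in>U. \<forall>i<d. \<forall>j<d. i \<noteq> j \<longrightarrow> X i z \<noteq> X j z"
    using lb unfolding leg_branches_def by auto
  have lead: "leg_poly a b d p 0 1 = 0"
  proof (rule ccontr)
    assume "leg_poly a b d p 0 1 \<noteq> 0"
    then have "X i (p, 0) = 0" if "i < d" for i
      using roots p0 that leg_poly_q0[of a b d p "X i (p, 0)"] by force
    moreover have "X 0 (p, 0) \<noteq> X 1 (p, 0)" using ne p0 d by force
    ultimately show False using d by simp
  qed
  define P where "P = leg_line_poly a b d p"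
  have P: "P \<noteq> 0" unfolding P_def using leg_line_poly_nonzero[OF hf] d by simp
  have "degree P \<noteq> d"
  proof
    assume "degree P = d"
    then have "lead_coeff P = 0" using lead coeff_leg_line_poly[of a b d p] unfolding P_def by simp
    with P show False by simp
  qed
  then have deg: "degree P < d" using degree_leg_line_poly[of a b d p] unfolding P_def by simp
  obtain r where r: "r > 0" "ball (p, 0) r \<subseteq> U" using U p0 open_contains_ball by blast
  define q :: complex where "q = of_real (r / 2)"
  have q: "q \<noteq> 0" using r unfolding q_def by simp
  have "dist (p, 0) (p, q) < r" using r unfolding q_def dist_Pair_Pair by (simp add: dist_norm)
  with r have pq: "(p, q) \<in> U" by auto
  have "(\<lambda>i. X i (p, q) / q) ` {..<d} \<subseteq> {x. poly P x = 0}"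
    using roots pq q unfolding P_def by (auto simp: poly_leg_line_poly intro!: leg_poly_root_div)
  moreover have "inj_on (\<lambda>i. X i (p, q) / q) {..<d}"
    using ne pq q unfolding inj_on_def by auto
  ultimately have "d \<le> card {x. poly P x = 0}"
    using card_inj_on_le[of _ "{..<d}"] poly_roots_finite[OF P] by fastforce
  also have "\<dots> \<le> degree P" by (rule card_poly_roots_bound[OF P])
  finally show False using deg by simp
qed

text \<open>Along \<open>(u,v) = (-p v, v)\<close> the hypothesis gives \<open>g(-p v, v) = \<kappa>/v\<^sup>2\<close>; continuity of \<open>g\<close>
  at the origin forces \<open>\<kappa> = 0\<close>.\<close>

lemma leg_curv_homogeneous_eq_0:
  assumes "leg_curv_holo_off_dualO a b d"
    and curv: "\<forall>q. q \<noteq> 0 \<longrightarrow> leg_curv_at a b d (p, q) (\<kappa> / q)"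
  shows "\<kappa> = 0"
proof -
  obtain g where g: "continuous_on UNIV g"
    and gk: "\<forall>u v k. v \<noteq> 0 \<longrightarrow> leg_curv_at a b d (- u / v, - 1 / v) k \<longrightarrow> g (u, v) = - k / v ^ 3"
    using assms(1) unfolding leg_curv_holo_off_dualO_def by blast
  have "v\<^sup>2 * g (- p * v, v) = \<kappa>" if v: "v \<noteq> 0" for v
  proof -
    have "leg_curv_at a b d (- (- p * v) / v, - 1 / v) (\<kappa> / (- 1 / v))"
      using curv[rule_format, of "- 1 / v"] v by simp
    then have "g (- p * v, v) = - (\<kappa> / (- 1 / v)) / v ^ 3" using gk v by blast
    with v show ?thesis by (simp add: field_simps power2_eq_square power3_eq_cube)
  qed
  then have "eventually (\<lambda>v. v\<^sup>2 * g (- p * v, v) = \<kappa>) (at (0::complex))"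
    by (auto simp: eventually_at_filter)
  moreover have "((\<lambda>v::complex. v\<^sup>2 * g (- p * v, v)) \<longlongrightarrow> 0\<^sup>2 * g (- p * 0, 0)) (at 0)"
    using g by (intro tendsto_intros isCont_tendsto_compose[of _ g])
      (auto simp: continuous_on_eq_continuous_at)
  ultimately have "((\<lambda>v::complex. \<kappa>) \<longlongrightarrow> 0) (at 0)"
    by (simp add: tendsto_cong)
  then show ?thesis by (simp add: tendsto_const_iff)
qed

theorem mainTheorem4:
  fixes a b :: "nat \<Rightarrow> complex" and d :: nat
  assumes "homogeneous_foliation a b d"
    and "leg_curv_holo_off_dualO a b d"
  shows "\<forall>z k. leg_curv_at a b d z k \<longrightarrow> k = 0"
proof (intro allI impI)
  fix z k assume curv: "leg_curv_at a b d z k"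
  obtain p q where z: "z = (p, q)" by fastforce
  show "k = 0"
  proof (cases "d < 3")
    case True
    then show ?thesis using curv web_curv_eq_0_if_less_3 unfolding leg_curv_at_def by blast
  next
    case False
    then have "q \<noteq> 0"
      using curv z leg_branches_avoid_dual_O[OF assms(1)] unfolding leg_curv_at_def by fastforce
    then obtain \<kappa> where "k = \<kappa> / q" and "\<forall>q'. q' \<noteq> 0 \<longrightarrow> leg_curv_at a b d (p, q') (\<kappa> / q')"
      using leg_curv_at_homogeneous[OF assms(1) _ curv[unfolded z]] False by auto
    with leg_curv_homogeneous_eq_0[OF assms(2)] show ?thesis by simp
  qed
qed

end
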